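(* Let $d\ge2$ and let the copula of a random vector $\boldsymbol Z\in\mathbb{R}^d$ be an Archimedean copula $C^\phi$ with generator $\phi$. Suppose $\phi^{\leftarrow}$ is $d$ times continuously differentiable and $(-D)^j\phi^{\leftarrow}(0)<\infty$ for all $j\in\{1,\dots,d\}$, where $D$ denotes differentiation. Then $\boldsymbol Z$ is both pairwise and mutually asymptotically independent.
   Context: An Archimedean copula is $C^\phi(u_1,\dots,u_d)=\phi^{\leftarrow}(\phi(u_1)+\dots+\phi(u_d))$, $u_j\in[0,1]$, where $\phi:[0,1]\to[0,\infty]$ is convex, decreasing, $\phi(1)=0$, such that $C^\phi$ is a copula, and $\phi^{\leftarrow}(y)=\inf\{u\in[0,1]:\phi(u)\le y\}$. The survival copula $\widehat C$ of $\boldsymbol Z$ is the copula with $\P(Z_1>z_1,\dots,Z_d>z_d)=\widehat C(\overline F_1(z_1),\dots,\overline F_d(z_d))$, $\overline F_j$ the marginal tail functions; $\widehat C_S$ is $\widehat C$ with arguments outside $S$ set to $1$ ($\widehat C_S(u)=u$ if $|S|=1$). Pairwise asymptotic independence: $\widehat C_{\{j,\ell\}}(u,u)=o(u)$ as $u\downarrow0$ for all distinct $j,\ell$. Mutual asymptotic independence: for all $S\subseteq\{1,\dots,d\}$ with $|S|\ge2$ and all $\ell\in S$, $\lim_{u\downarrow0}\widehat C_S(u,\dots,u)/\widehat C_{S\setminus\{\ell\}}(u,\dots,u)=0$ (with $0/0:=0$). *)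

theory Defs
  imports "HOL-Analysis.Analysis" "HOL-Library.Extended_Nonnegative_Real" "HOL-Library.Landau_Symbols"
begin

text \<open>Vectors in [0,1]^d are represented as functions nat => real; only the
coordinates 0..d-1 matter.\<close>

definition is_copula :: "nat \<Rightarrow> ((nat \<Rightarrow> real) \<Rightarrow> real) \<Rightarrow> bool" where
  "is_copula d C \<longleftrightarrow>
     (\<forall>u. (\<forall>j<d. 0 \<le> u j \<and> u j \<le> 1) \<longrightarrow> 0 \<le> C u \<and> C u \<le> 1) \<and>
     (\<forall>u. (\<forall>j<d. 0 \<le> u j \<and> u j \<le> 1) \<and> (\<exists>j<d. u j = 0) \<longrightarrow> C u = 0) \<and>
     (\<forall>j<d. \<forall>x. 0 \<le> x \<and> x \<le> 1 \<longrightarrow> C (\<lambda>i. if i = j then x else 1) = x) \<and>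
     (\<forall>a b. (\<forall>j<d. 0 \<le> a j \<and> a j \<le> b j \<and> b j \<le> 1) \<longrightarrow>
        0 \<le> (\<Sum>T\<in>Pow {..<d}. (-1) ^ card T * C (\<lambda>j. if j \<in> T then a j else b j)))"

definition gen_inv :: "(real \<Rightarrow> ennreal) \<Rightarrow> ennreal \<Rightarrow> real" where
  "gen_inv \<phi> y = Inf {u \<in> {0..1}. \<phi> u \<le> y}"

definition archimedean_copula :: "nat \<Rightarrow> (real \<Rightarrow> ennreal) \<Rightarrow> (nat \<Rightarrow> real) \<Rightarrow> real" where
  "archimedean_copula d \<phi> u = gen_inv \<phi> (\<Sum>j<d. \<phi> (u j))"

definition archimedean_generator :: "nat \<Rightarrow> (real \<Rightarrow> ennreal) \<Rightarrow> bool" where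
  "archimedean_generator d \<phi> \<longleftrightarrow>
     (\<forall>x y t. 0 \<le> x \<and> x \<le> 1 \<and> 0 \<le> y \<and> y \<le> 1 \<and> 0 \<le> t \<and> t \<le> 1 \<longrightarrow>
        \<phi> ((1 - t) * x + t * y) \<le> ennreal (1 - t) * \<phi> x + ennreal t * \<phi> y) \<and>
     (\<forall>x y. 0 \<le> x \<and> x \<le> y \<and> y \<le> 1 \<longrightarrow> \<phi> y \<le> \<phi> x) \<and>
     \<phi> 1 = 0 \<and>
     is_copula d (archimedean_copula d \<phi>)"

text \<open>Survival copula of a copula C (i.e. of a random vector U ~ C):
  hat C(v) = P(U_j > 1 - v_j for all j), written out by inclusion-exclusion.\<close>
definition survival_copula :: "nat \<Rightarrow> ((nat \<Rightarrow> real) \<Rightarrow> real) \<Rightarrow> (nat \<Rightarrow> real) \<Rightarrow> real" where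
  "survival_copula d C v =
     (\<Sum>T\<in>Pow {..<d}. (-1) ^ card T * C (\<lambda>j. if j \<in> T then 1 - v j else 1))"

definition surv_marg :: "nat \<Rightarrow> ((nat \<Rightarrow> real) \<Rightarrow> real) \<Rightarrow> nat set \<Rightarrow> real \<Rightarrow> real" where
  "surv_marg d C S u = survival_copula d C (\<lambda>j. if j \<in> S then u else 1)"

definition pairwise_asymp_indep :: "nat \<Rightarrow> ((nat \<Rightarrow> real) \<Rightarrow> real) \<Rightarrow> bool" where
  "pairwise_asymp_indep d C \<longleftrightarrow>
     (\<forall>j l. j < d \<and> l < d \<and> j \<noteq> l \<longrightarrow>
        (\<lambda>u. surv_marg d C {j, l} u) \<in> o[at_right 0](\<lambda>u. u))"

text \<open>Division by zero gives 0 in Isabelle, matching the convention 0/0 := 0.\<close>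
definition mutual_asymp_indep :: "nat \<Rightarrow> ((nat \<Rightarrow> real) \<Rightarrow> real) \<Rightarrow> bool" where
  "mutual_asymp_indep d C \<longleftrightarrow>
     (\<forall>S l. S \<subseteq> {..<d} \<and> card S \<ge> 2 \<and> l \<in> S \<longrightarrow>
        ((\<lambda>u. surv_marg d C S u / surv_marg d C (S - {l}) u) \<longlongrightarrow> 0) (at_right 0))"

end

theory Submission
  imports Defs
begin

text \<open>Let \<open>\<psi> = \<phi>\<^sup>\<leftarrow>\<close>. For \<open>|S| = k\<close>, the value \<open>C\<^sub>S(u, \<dots>, u)\<close> is the \<open>C\<close>-volume of a box, which
  for an Archimedean copula is \<open>(-1)^k\<close> times the \<open>k\<close>-th forward difference of \<open>\<psi>\<close> at \<open>0\<close> with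
  step \<open>t = \<phi>(1 - u) \<rightarrow> 0\<close>. Since volumes are nonnegative and \<open>\<phi>\<close> takes all small values,
  the derivatives \<open>(-D)^j \<psi>\<close> are nonnegative near \<open>0\<close>, and the mean value theorem writes that
  difference as \<open>t^k (-D)^k \<psi>(\<xi>)\<close> with \<open>\<xi> = O(t)\<close>. Hence the ratio of the differences over \<open>S\<close>
  and \<open>S - {l}\<close> is \<open>O(t)\<close> if \<open>(-D)^(k-1) \<psi>(0) > 0\<close>; otherwise \<open>(-D)^(k-1) \<psi>\<close>, being
  nonnegative and decreasing, vanishes near \<open>0\<close> and so does the numerator. Pairwise asymptotic
  independence is the case \<open>k = 2\<close>, because \<open>C\<^sub>{\<^sub>j\<^sub>}(u) = u\<close>.\<close>

text \<open>\<open>(-1)^|S|\<close> times the \<open>|S|\<close>-th forward difference of \<open>F\<close> at \<open>s\<close> with step \<open>h\<close>, indexed by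
  subsets so that it matches inclusion-exclusion sums over the coordinates in \<open>S\<close>.\<close>
definition finite_diff :: "(real \<Rightarrow> real) \<Rightarrow> 'a set \<Rightarrow> real \<Rightarrow> real \<Rightarrow> real" where
  "finite_diff F S s h = (\<Sum>T\<in>Pow S. (-1) ^ card T * F (s + real (card T) * h))"

lemma finite_diff_empty [simp]: "finite_diff F {} s h = F s"
  by (simp add: finite_diff_def)

lemma finite_diff_insert:
  assumes "finite S" "x \<notin> S"
  shows "finite_diff F (insert x S) s h = finite_diff F S s h - finite_diff F S (s + h) h"
proof -
  have inj: "inj_on (insert x) (Pow S)"
    using assms(2) by (intro inj_onI) (metis PowD insert_ident subsetD)
  have card_insert: "card (insert x T) = Suc (card T)" if "T \<in> Pow S" for T
  proof -
    have "finite T" "x \<notin> T" using that assms finite_subset by auto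
    then show ?thesis by simp
  qed
  have "finite_diff F (insert x S) s h = finite_diff F S s h
      + (\<Sum>T\<in>insert x ` Pow S. (-1) ^ card T * F (s + real (card T) * h))"
    unfolding finite_diff_def Pow_insert using assms by (subst sum.union_disjoint) auto
  also have "(\<Sum>T\<in>insert x ` Pow S. (-1) ^ card T * F (s + real (card T) * h))
      = - finite_diff F S (s + h) h"
    by (simp add: sum.reindex[OF inj] card_insert finite_diff_def sum_negf algebra_simps)
  finally show ?thesis by simp
qed

lemma finite_diff_singleton: "finite_diff F {x} s h = F s - F (s + h)"
  using finite_diff_insert[of "{}" x F s h] by simp

lemma finite_diff_mean_value:
  assumes "finite S" "j + card S \<le> n" "0 \<le> s" "0 \<le> h"
    and deriv: "\<And>i t. i < n \<Longrightarrow> 0 \<le> t \<Longrightarrow> (F i has_real_derivative F (Suc i) t) (at t within {0..})"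
  shows "\<exists>\<xi>\<in>{s..s + real (card S) * h}. finite_diff (F j) S s h = (-h) ^ card S * F (j + card S) \<xi>"
  using assms(1-3)
proof (induction S arbitrary: j s rule: finite_induct)
  case (insert x S)
  define G where "G y = finite_diff (F (Suc j)) S y h" for y
  have "((\<lambda>y. finite_diff (F j) S y h) has_real_derivative G y) (at y within {s..s+h})"
    if "s \<le> y" for y
    unfolding finite_diff_def G_def
  proof (intro DERIV_sum DERIV_cmult)
    fix T :: "'a set"
    let ?g = "\<lambda>y. y + real (card T) * h"
    have "(F j has_real_derivative F (Suc j) (?g y)) (at (?g y) within ?g ` {s..s+h})"
      using insert.prems insert.hyps that \<open>0 \<le> h\<close>
      by (intro has_field_derivative_subset[OF deriv]) auto
    moreover have "(?g has_real_derivative 1) (at y within {s..s+h})"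
      by (auto intro!: derivative_eq_intros)
    ultimately show "((\<lambda>y. F j (?g y)) has_real_derivative F (Suc j) (?g y))
        (at y within {s..s+h})"
      using DERIV_image_chain by (fastforce simp: o_def)
  qed
  then have "((\<lambda>y. finite_diff (F j) S y h) has_derivative (*) (G y)) (at y within {s..s+h})"
    if "s \<le> y" for y
    using that unfolding has_field_derivative_def by simp
  then obtain \<eta> where \<eta>: "\<eta> \<in> {s..s+h}"
    and mvt: "finite_diff (F j) S (s + h) h - finite_diff (F j) S s h = G \<eta> * h"
    using mvt_very_simple[of s "s + h" "\<lambda>y. finite_diff (F j) S y h" "\<lambda>y. (*) (G y)"] \<open>0 \<le> h\<close>
    by auto
  obtain \<xi> where \<xi>: "\<xi> \<in> {\<eta>..\<eta> + real (card S) * h}"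
    and IH: "G \<eta> = (-h) ^ card S * F (Suc j + card S) \<xi>"
    using insert.IH[of "Suc j" \<eta>] insert.prems insert.hyps \<eta> unfolding G_def by auto
  have "finite_diff (F j) (insert x S) s h = - (G \<eta> * h)"
    using finite_diff_insert[OF insert.hyps] mvt by simp
  also have "\<dots> = (-h) ^ card (insert x S) * F (j + card (insert x S)) \<xi>"
    using IH insert.hyps by (simp add: mult_ac)
  finally show ?case
    using \<xi> \<eta> insert.hyps by (intro bexI[of _ \<xi>]) (auto simp: algebra_simps)
qed simp

lemma eventually_at_right_0_below:
  "0 < c \<Longrightarrow> eventually (\<lambda>x. 0 < x \<and> x < c) (at_right (0::real))"
  unfolding eventually_at_right_field by blast

lemma eventually_at_right_0_interval:
  fixes x c :: real
  assumes "eventually P (at_right x)" "P x" "0 \<le> c"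
  shows "eventually (\<lambda>h. \<forall>\<xi>\<in>{x..x + c * h}. P \<xi>) (at_right 0)"
proof -
  obtain b where "x < b" and P: "\<And>y. x < y \<Longrightarrow> y < b \<Longrightarrow> P y"
    using assms(1) unfolding eventually_at_right_field by blast
  have "eventually (\<lambda>h. 0 < h \<and> h < (b - x) / (c + 1)) (at_right (0::real))"
    using \<open>x < b\<close> assms(3) by (intro eventually_at_right_0_below) simp
  then show ?thesis
  proof eventually_elim
    case (elim h)
    then have "c * h \<le> (c + 1) * h" "(c + 1) * h < b - x"
      using assms(3) by (auto simp: field_simps)
    then have "c * h < b - x" by linarith
    show ?case
    proof
      fix \<xi> assume "\<xi> \<in> {x..x + c * h}"
      then consider "\<xi> = x" | "x < \<xi>" "\<xi> < b"
        using \<open>c * h < b - x\<close> by fastforce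
      then show "P \<xi>" using P assms(2) by cases auto
    qed
  qed
qed

lemma tendsto_ratio_at_right_0:
  fixes N M :: "real \<Rightarrow> real"
  assumes "eventually (\<lambda>t. \<bar>N t\<bar> \<le> B * t ^ Suc m) (at_right 0)"
    and "eventually (\<lambda>t. a * t ^ m \<le> M t) (at_right 0)" and "0 < a"
  shows "((\<lambda>t. N t / M t) \<longlongrightarrow> 0) (at_right 0)"
proof (rule Lim_null_comparison)
  show "eventually (\<lambda>t. norm (N t / M t) \<le> B / a * t) (at_right 0)"
    using assms(1,2) eventually_at_right_less[of 0]
  proof eventually_elim
    case (elim t)
    have "0 < a * t ^ m" using elim \<open>0 < a\<close> by simp
    then have M_pos: "0 < M t" using elim by linarith
    have "norm (N t / M t) = \<bar>N t\<bar> / M t" using M_pos by simp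
    also have "\<dots> \<le> B * t ^ Suc m / (a * t ^ m)"
      using elim M_pos abs_ge_zero[of "N t"] \<open>0 < a\<close> by (intro frac_le) auto
    also have "\<dots> = B / a * t" using elim \<open>0 < a\<close> by simp
    finally show ?case .
  qed
  show "((\<lambda>t. B / a * t) \<longlongrightarrow> 0) (at_right 0)"
    using tendsto_mult[OF tendsto_const tendsto_ident_at, of "B / a" 0 "{0<..}"] by simp
qed

locale smooth_archimedean =
  fixes d :: nat and \<phi> :: "real \<Rightarrow> ennreal" and D :: "nat \<Rightarrow> real \<Rightarrow> real"
  assumes two_le_d: "d \<ge> 2"
    and generator: "archimedean_generator d \<phi>"
    and D0: "\<forall>t\<ge>0. D 0 t = gen_inv \<phi> (ennreal t)"
    and D_deriv: "\<forall>j<d. \<forall>t\<ge>0. (D j has_real_derivative D (Suc j) t) (at t within {0..})"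
    and D_cont: "\<forall>j\<le>d. continuous_on {0..} (D j)"
begin

abbreviation "C \<equiv> archimedean_copula d \<phi>"

lemma is_copula: "is_copula d C"
  and generator_one: "\<phi> 1 = 0"
  and generator_antimono: "0 \<le> x \<Longrightarrow> x \<le> y \<Longrightarrow> y \<le> 1 \<Longrightarrow> \<phi> y \<le> \<phi> x"
  and generator_convex: "0 \<le> x \<Longrightarrow> x \<le> 1 \<Longrightarrow> 0 \<le> y \<Longrightarrow> y \<le> 1 \<Longrightarrow> 0 \<le> t \<Longrightarrow> t \<le> 1 \<Longrightarrow>
        \<phi> ((1 - t) * x + t * y) \<le> ennreal (1 - t) * \<phi> x + ennreal t * \<phi> y"
  using generator unfolding archimedean_generator_def by blast+

text \<open>A consequence of the uniform margins of \<open>C\<close>.\<close>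
lemma gen_inv_generator:
  assumes "0 \<le> x" "x \<le> 1"
  shows "gen_inv \<phi> (\<phi> x) = x"
proof -
  have "(\<Sum>i<d. \<phi> (if i = 0 then x else 1)) = (\<Sum>i<d. if i = 0 then \<phi> x else 0)"
    by (rule sum.cong) (auto simp: generator_one)
  also have "\<dots> = \<phi> x" using two_le_d by (simp add: sum.delta)
  finally have "C (\<lambda>i. if i = 0 then x else 1) = gen_inv \<phi> (\<phi> x)"
    by (simp add: archimedean_copula_def)
  moreover have "C (\<lambda>i. if i = 0 then x else 1) = x"
    using is_copula assms two_le_d unfolding is_copula_def by auto
  ultimately show ?thesis by simp
qed

lemma D0_zero: "D 0 0 = 1"
  using D0 gen_inv_generator[of 1] by (simp add: generator_one)

lemma generator_inj:
  "0 \<le> x \<Longrightarrow> x \<le> 1 \<Longrightarrow> 0 \<le> y \<Longrightarrow> y \<le> 1 \<Longrightarrow> \<phi> x = \<phi> y \<Longrightarrow> x = y"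
  by (metis gen_inv_generator)

lemma generator_finite:
  assumes "0 < x" "x \<le> 1"
  shows "\<phi> x \<noteq> \<infinity>"
proof
  assume "\<phi> x = \<infinity>"
  have "{u \<in> {0..1}. \<phi> u \<le> \<infinity>} = {0..(1::real)}" by auto
  then have "gen_inv \<phi> \<infinity> = 0" unfolding gen_inv_def by simp
  then show False
    using gen_inv_generator[of x] assms \<open>\<phi> x = \<infinity>\<close> by simp
qed

definition phi_real :: "real \<Rightarrow> real" where
  "phi_real x = enn2real (\<phi> x)"

lemma generator_eq_phi_real: "0 < x \<Longrightarrow> x \<le> 1 \<Longrightarrow> \<phi> x = ennreal (phi_real x)"
  using generator_finite by (simp add: phi_real_def less_top)

lemma phi_real_nonneg: "0 \<le> phi_real x"
  by (simp add: phi_real_def)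

lemma phi_real_pos:
  assumes "0 < x" "x < 1"
  shows "0 < phi_real x"
proof -
  have "\<phi> x \<noteq> \<phi> 1" using generator_inj[of x 1] assms by auto
  then show ?thesis
    using generator_eq_phi_real[of x] assms phi_real_nonneg[of x]
    by (auto simp: generator_one less_le)
qed

abbreviation "phi_half \<equiv> phi_real (1/2)"

lemma phi_half_pos: "0 < phi_half"
  by (rule phi_real_pos) auto

lemma phi_real_near_one:
  assumes "0 \<le> u" "u \<le> 1/2"
  shows "phi_real (1 - u) \<le> 2 * u * phi_half"
proof -
  have "\<phi> ((1 - (1 - 2*u)) * (1/2) + (1 - 2*u) * 1)
      \<le> ennreal (1 - (1 - 2*u)) * \<phi> (1/2) + ennreal (1 - 2*u) * \<phi> 1"
    using assms by (intro generator_convex) auto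
  then have "ennreal (phi_real (1 - u)) \<le> ennreal (2 * u) * ennreal phi_half"
    using assms generator_eq_phi_real[of "1 - u"] generator_eq_phi_real[of "1/2"]
    by (simp add: generator_one)
  then have "ennreal (phi_real (1 - u)) \<le> ennreal (2 * u * phi_half)"
    using assms by (simp add: ennreal_mult phi_real_nonneg mult.assoc)
  then show ?thesis using assms phi_half_pos by (simp add: ennreal_le_iff)
qed

lemma convex_on_phi_real: "convex_on {0<..<1} phi_real"
proof (rule convex_onI)
  fix t x y :: real assume t: "0 < t" "t < 1" and x: "x \<in> {0<..<1}" and y: "y \<in> {0<..<1}"
  have z: "0 < (1 - t) * x + t * y" "(1 - t) * x + t * y \<le> 1"
    using t x y convex_bound_le[of x 1 y "1 - t" t] by (auto intro: add_pos_pos)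
  have "ennreal (phi_real ((1 - t) * x + t * y)) \<le> ennreal (1 - t) * \<phi> x + ennreal t * \<phi> y"
    using t x y z by (subst generator_eq_phi_real[symmetric]) (auto intro: generator_convex)
  also have "\<dots> = ennreal ((1 - t) * phi_real x + t * phi_real y)"
    using t x y generator_eq_phi_real[of x] generator_eq_phi_real[of y] phi_real_nonneg[of x] phi_real_nonneg[of y]
    by (simp add: ennreal_mult ennreal_plus)
  finally show "phi_real ((1 - t) *\<^sub>R x + t *\<^sub>R y) \<le> (1 - t) * phi_real x + t * phi_real y"
    using t phi_real_nonneg[of x] phi_real_nonneg[of y] by (simp add: ennreal_le_iff del: ennreal_plus)
qed (simp add: convex_real_interval)

lemma generator_attains:
  assumes "0 \<le> y" "y \<le> phi_half"
  obtains v where "v \<in> {1/2..1}" "\<phi> v = ennreal y"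
proof (cases "y = 0")
  case True
  then show ?thesis using that[of 1] by (simp add: generator_one)
next
  case False
  define u where "u = y / (2 * phi_half)"
  have u: "0 < u" "u \<le> 1/2"
    using assms False phi_half_pos by (auto simp: u_def field_simps)
  have "continuous_on {1/2..1-u} phi_real"
    using convex_on_continuous[OF _ convex_on_phi_real] u by (auto intro: continuous_on_subset)
  moreover have "phi_real (1 - u) \<le> y"
    using phi_real_near_one[of u] u phi_half_pos by (simp add: u_def)
  ultimately obtain v where "1/2 \<le> v" "v \<le> 1 - u" "phi_real v = y"
    using IVT2'[of phi_real "1 - u" y "1/2"] u assms by auto
  then show ?thesis using that[of v] generator_eq_phi_real[of v] u by auto
qed

lemma generator_sum_box:
  assumes S: "S \<subseteq> {..<d}" and "T \<subseteq> S"
    and p: "\<phi> p = ennreal \<alpha>" and q: "\<phi> q = ennreal \<beta>" and "0 \<le> \<alpha>" "0 \<le> \<beta>"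
  shows "(\<Sum>i<d. \<phi> (if i \<in> T then p else if i \<in> S then q else 1))
       = ennreal (real (card S) * \<beta> + real (card T) * (\<alpha> - \<beta>))"
proof -
  have "finite S" using S by (rule finite_subset) simp
  then have fin: "finite S" "finite T" using \<open>T \<subseteq> S\<close> finite_subset by auto
  have cap: "{..<d} \<inter> T = T" "{..<d} \<inter> (S - T) = S - T"
    using assms by auto
  have "(\<Sum>i<d. \<phi> (if i \<in> T then p else if i \<in> S then q else 1))
      = (\<Sum>i<d. ennreal ((if i \<in> T then \<alpha> else 0) + (if i \<in> S - T then \<beta> else 0)))"
    by (rule sum.cong) (use assms in \<open>auto simp: generator_one\<close>)
  also have "\<dots> = ennreal (\<Sum>i<d. (if i \<in> T then \<alpha> else 0) + (if i \<in> S - T then \<beta> else 0))"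
    using assms by (intro sum_ennreal) auto
  also have "(\<Sum>i<d. (if i \<in> T then \<alpha> else 0) + (if i \<in> S - T then \<beta> else 0))
      = (\<Sum>i\<in>{..<d} \<inter> T. \<alpha>) + (\<Sum>i\<in>{..<d} \<inter> (S - T). \<beta>)"
    by (simp only: sum.distrib sum.inter_restrict[OF finite_lessThan])
  also have "\<dots> = real (card T) * \<alpha> + real (card (S - T)) * \<beta>"
    using cap by simp
  also have "\<dots> = real (card S) * \<beta> + real (card T) * (\<alpha> - \<beta>)"
    using fin \<open>T \<subseteq> S\<close> card_mono[of S T] by (simp add: card_Diff_subset of_nat_diff algebra_simps)
  finally show ?thesis .
qed

text \<open>The \<open>C\<close>-volume of the box that is \<open>[p, q]\<close> in the coordinates of \<open>S\<close> and \<open>[0, 1]\<close> in the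
  others; by groundedness only the vertices with all other coordinates \<open>1\<close> contribute.\<close>
lemma copula_volume_eq_finite_diff:
  assumes S: "S \<subseteq> {..<d}" and "0 \<le> p" "p \<le> 1" "0 \<le> q" "q \<le> 1"
    and "\<phi> p = ennreal \<alpha>" "\<phi> q = ennreal \<beta>" "0 \<le> \<alpha>" "0 \<le> \<beta>"
  shows "(\<Sum>T\<in>Pow {..<d}. (-1) ^ card T * C (\<lambda>j. if j \<in> T then (if j \<in> S then p else 0) else (if j \<in> S then q else 1)))
       = finite_diff (D 0) S (real (card S) * \<beta>) (\<alpha> - \<beta>)"
proof -
  let ?u = "\<lambda>T j. if j \<in> T then (if j \<in> S then p else 0) else (if j \<in> S then q else 1)"
  have "C (?u T) = 0" if "T \<in> Pow {..<d} - Pow S" for T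
  proof -
    from that have "T \<subseteq> {..<d}" "\<not> T \<subseteq> S" by auto
    then obtain i where "i \<in> T" "i \<notin> S" "i < d" by auto
    then show ?thesis
      using is_copula assms unfolding is_copula_def by (elim conjE allE[of _ "?u T"]) auto
  qed
  then have "(\<Sum>T\<in>Pow {..<d}. (-1) ^ card T * C (?u T)) = (\<Sum>T\<in>Pow S. (-1) ^ card T * C (?u T))"
    using S by (intro sum.mono_neutral_right) auto
  also have "\<dots> = finite_diff (D 0) S (real (card S) * \<beta>) (\<alpha> - \<beta>)"
    unfolding finite_diff_def
  proof (rule sum.cong)
    fix T assume "T \<in> Pow S"
    then have "T \<subseteq> S" by auto
    have "?u T = (\<lambda>j. if j \<in> T then p else if j \<in> S then q else 1)"
      using \<open>T \<subseteq> S\<close> by (auto simp: fun_eq_iff)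
    moreover have "0 \<le> real (card S) * \<beta> + real (card T) * (\<alpha> - \<beta>)"
    proof -
      have "card T \<le> card S"
        using \<open>T \<subseteq> S\<close> S by (intro card_mono) (auto intro: finite_subset)
      then have "real (card T) * \<beta> \<le> real (card S) * \<beta>"
        using assms by (intro mult_right_mono) auto
      moreover have "0 \<le> real (card T) * \<alpha>" using assms by simp
      ultimately show ?thesis by (simp add: algebra_simps)
    qed
    ultimately show "(-1) ^ card T * C (?u T)
        = (-1) ^ card T * D 0 (real (card S) * \<beta> + real (card T) * (\<alpha> - \<beta>))"
      using generator_sum_box[OF S \<open>T \<subseteq> S\<close>] assms D0 by (simp add: archimedean_copula_def)
  qed simp
  finally show ?thesis .
qed

text \<open>Every such finite difference with small enough arguments is a \<open>C\<close>-volume, since \<open>\<phi>\<close>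
  attains all values in \<open>[0, phi_half]\<close>.\<close>
lemma finite_diff_nonneg:
  assumes S: "S \<subseteq> {..<d}" "S \<noteq> {}" and x: "0 \<le> x" "x \<le> phi_half / 2"
    and h: "0 \<le> h" "h \<le> phi_half / 2"
  shows "0 \<le> finite_diff (D 0) S x h"
proof -
  have "card S \<ge> 1" using S finite_subset by (auto simp: Suc_le_eq card_gt_0_iff)
  then have "x \<le> x * real (card S)"
    using mult_left_mono[of 1 "real (card S)" x] x by simp
  define \<beta> where "\<beta> = x / card S"
  have \<beta>: "0 \<le> \<beta>" "\<beta> \<le> x" "real (card S) * \<beta> = x"
    using x \<open>card S \<ge> 1\<close> \<open>x \<le> x * real (card S)\<close> by (auto simp: \<beta>_def field_simps)
  obtain v where v: "v \<in> {1/2..1}" "\<phi> v = ennreal \<beta>"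
    using generator_attains[of \<beta>] \<beta> x phi_half_pos by auto
  obtain w where w: "w \<in> {1/2..1}" "\<phi> w = ennreal (\<beta> + h)"
    using generator_attains[of "\<beta> + h"] \<beta> x h by auto
  have "w \<le> v"
  proof (rule ccontr)
    assume "\<not> w \<le> v"
    then have "\<phi> w \<le> \<phi> v" using v w by (intro generator_antimono) auto
    then have "h = 0" using v w \<beta> h by (simp add: ennreal_le_iff)
    then have "w = v" using v w by (intro generator_inj) auto
    then show False using \<open>\<not> w \<le> v\<close> by simp
  qed
  then have "0 \<le> (\<Sum>T\<in>Pow {..<d}. (-1) ^ card T *
      C (\<lambda>j. if j \<in> T then (if j \<in> S then w else 0) else (if j \<in> S then v else 1)))"
    using is_copula v w unfolding is_copula_def
    by (elim conjE allE[of _ "\<lambda>j. if j \<in> S then w else 0"] allE[of _ "\<lambda>j. if j \<in> S then v else 1"]) auto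
  then show ?thesis
    using copula_volume_eq_finite_diff[OF S(1), of w v "\<beta> + h" \<beta>] v w \<beta> h by simp
qed

definition alt_deriv :: "nat \<Rightarrow> real \<Rightarrow> real" where
  "alt_deriv j t = (-1) ^ j * D j t"

lemma finite_diff_eq_alt_deriv:
  assumes "finite S" "card S \<le> d" "0 \<le> s" "0 \<le> h"
  obtains \<xi> where "\<xi> \<in> {s..s + real (card S) * h}"
    "finite_diff (D 0) S s h = h ^ card S * alt_deriv (card S) \<xi>"
proof -
  obtain \<xi> where "\<xi> \<in> {s..s + real (card S) * h}"
    "finite_diff (D 0) S s h = (-h) ^ card S * D (card S) \<xi>"
    using finite_diff_mean_value[of S 0 d s h D] assms D_deriv by auto
  then show ?thesis
    using that by (simp add: alt_deriv_def power_minus[of h] mult_ac)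
qed

lemma tendsto_alt_deriv:
  assumes "j \<le> d" "0 \<le> x"
  shows "(alt_deriv j \<longlongrightarrow> alt_deriv j x) (at_right x)"
proof -
  have "(D j \<longlongrightarrow> D j x) (at x within {0..})"
    using D_cont assms unfolding continuous_on_def by auto
  then have "(D j \<longlongrightarrow> D j x) (at_right x)"
    by (rule tendsto_within_subset) (use assms in auto)
  then show ?thesis
    unfolding alt_deriv_def[abs_def] by (intro tendsto_intros)
qed

text \<open>Complete monotonicity of \<open>\<psi>\<close> near \<open>0\<close>: a negative \<open>(-D)^j \<psi>\<close> would, by continuity and the
  mean value theorem, produce a negative \<open>C\<close>-volume.\<close>
lemma alt_deriv_nonneg:
  assumes "1 \<le> j" "j \<le> d" "0 \<le> x" "x \<le> phi_half / 2"
  shows "0 \<le> alt_deriv j x"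
proof (rule ccontr)
  assume neg: "\<not> 0 \<le> alt_deriv j x"
  have "eventually (\<lambda>\<xi>. alt_deriv j \<xi> < 0) (at_right x)"
    using tendsto_alt_deriv[of j x] assms neg by (intro order_tendstoD(2)) auto
  then have "eventually (\<lambda>h. \<forall>\<xi>\<in>{x..x + real j * h}. alt_deriv j \<xi> < 0) (at_right 0)"
    using neg by (intro eventually_at_right_0_interval) auto
  then have "eventually (\<lambda>h. (\<forall>\<xi>\<in>{x..x + real j * h}. alt_deriv j \<xi> < 0) \<and> 0 < h \<and> h < phi_half / 2)
      (at_right 0)"
    using eventually_at_right_0_below[of "phi_half / 2"] phi_half_pos by (auto intro: eventually_conj)
  then obtain h where h: "0 < h" "h < phi_half / 2" and neg_near: "\<forall>\<xi>\<in>{x..x + real j * h}. alt_deriv j \<xi> < 0"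
    by (auto dest: eventually_happens)
  obtain \<xi> where "\<xi> \<in> {x..x + real j * h}" and eq: "finite_diff (D 0) {..<j} x h = h ^ j * alt_deriv j \<xi>"
    using finite_diff_eq_alt_deriv[of "{..<j}" x h] assms h by auto
  then have "finite_diff (D 0) {..<j} x h < 0"
    using neg_near h by (simp add: mult_pos_neg)
  moreover have "0 \<le> finite_diff (D 0) {..<j} x h"
    using assms h by (intro finite_diff_nonneg) (auto simp: lessThan_empty_iff)
  ultimately show False by simp
qed

lemma alt_deriv_antimono:
  assumes "m < d" "0 \<le> x" "x \<le> y" "y \<le> phi_half / 2"
  shows "alt_deriv m y \<le> alt_deriv m x"
proof -
  obtain \<xi> where \<xi>: "\<xi> \<in> {x..x + real (card {m}) * (y - x)}"
    and mvt: "finite_diff (D m) {m} x (y - x) = (- (y - x)) ^ card {m} * D (m + card {m}) \<xi>"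
    using finite_diff_mean_value[of "{m}" m d x "y - x" D] assms D_deriv by auto
  have "D m x - D m y = (x - y) * D (Suc m) \<xi>"
    using mvt by (simp add: finite_diff_singleton)
  have "alt_deriv m x - alt_deriv m y = (-1) ^ m * (D m x - D m y)"
    unfolding alt_deriv_def by (simp add: right_diff_distrib)
  also have "\<dots> = (y - x) * alt_deriv (Suc m) \<xi>"
    unfolding alt_deriv_def \<open>D m x - D m y = _\<close> by (simp add: algebra_simps)
  finally have "alt_deriv m x - alt_deriv m y = (y - x) * alt_deriv (Suc m) \<xi>" .
  moreover have "0 \<le> alt_deriv (Suc m) \<xi>"
    using \<xi> assms by (intro alt_deriv_nonneg) auto
  moreover have "0 \<le> y - x" using assms by simp
  ultimately show ?thesis
    by (metis diff_ge_0_iff_ge mult_nonneg_nonneg)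
qed

lemma eventually_abs_finite_diff_le:
  assumes "finite S" "card S \<le> d"
  shows "eventually (\<lambda>t. \<bar>finite_diff (D 0) S 0 t\<bar> \<le> (\<bar>alt_deriv (card S) 0\<bar> + 1) * t ^ card S)
    (at_right 0)"
proof -
  let ?k = "card S" and ?B = "\<bar>alt_deriv (card S) 0\<bar> + 1"
  have "eventually (\<lambda>\<xi>. \<bar>alt_deriv ?k \<xi>\<bar> < ?B) (at_right 0)"
    using tendsto_rabs[OF tendsto_alt_deriv[of ?k 0]] assms by (intro order_tendstoD(2)) auto
  then have "eventually (\<lambda>t. \<forall>\<xi>\<in>{0..0 + real ?k * t}. \<bar>alt_deriv ?k \<xi>\<bar> < ?B) (at_right 0)"
    by (rule eventually_at_right_0_interval) auto
  then show ?thesis using eventually_at_right_less[of 0]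
  proof eventually_elim
    case (elim t)
    obtain \<xi> where \<xi>: "\<xi> \<in> {0..0 + real ?k * t}"
      and eq: "finite_diff (D 0) S 0 t = t ^ ?k * alt_deriv ?k \<xi>"
      using finite_diff_eq_alt_deriv[of S 0 t] assms elim by auto
    have "\<bar>alt_deriv ?k \<xi>\<bar> \<le> ?B" using bspec[OF elim(1) \<xi>] by simp
    then show ?case
      using eq elim mult_right_mono[of "\<bar>alt_deriv ?k \<xi>\<bar>" ?B "t ^ ?k"] by (simp add: abs_mult mult.commute)
  qed
qed

lemma eventually_finite_diff_ge:
  assumes "finite S" "card S \<le> d" "0 < alt_deriv (card S) 0"
  shows "eventually (\<lambda>t. alt_deriv (card S) 0 / 2 * t ^ card S \<le> finite_diff (D 0) S 0 t) (at_right 0)"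
proof -
  let ?k = "card S" and ?a = "alt_deriv (card S) 0 / 2"
  have "eventually (\<lambda>\<xi>. ?a < alt_deriv ?k \<xi>) (at_right 0)"
    using tendsto_alt_deriv[of ?k 0] assms by (intro order_tendstoD(1)) auto
  then have "eventually (\<lambda>t. \<forall>\<xi>\<in>{0..0 + real ?k * t}. ?a < alt_deriv ?k \<xi>) (at_right 0)"
    by (rule eventually_at_right_0_interval) (use assms in auto)
  then show ?thesis using eventually_at_right_less[of 0]
  proof eventually_elim
    case (elim t)
    obtain \<xi> where \<xi>: "\<xi> \<in> {0..0 + real ?k * t}"
      and eq: "finite_diff (D 0) S 0 t = t ^ ?k * alt_deriv ?k \<xi>"
      using finite_diff_eq_alt_deriv[of S 0 t] assms elim by auto
    have "?a \<le> alt_deriv ?k \<xi>" using bspec[OF elim(1) \<xi>] by simp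
    then show ?case
      using eq elim mult_right_mono[of ?a "alt_deriv ?k \<xi>" "t ^ ?k"] by (simp add: mult.commute)
  qed
qed

lemma eventually_finite_diff_insert_eq_0:
  assumes "finite S" "l \<notin> S" "1 \<le> card S" "card S < d" "alt_deriv (card S) 0 = 0"
  shows "eventually (\<lambda>t. finite_diff (D 0) (insert l S) 0 t = 0) (at_right 0)"
proof -
  let ?m = "card S"
  have vanish: "alt_deriv ?m y = 0" if "0 \<le> y" "y \<le> phi_half / 2" for y
    using alt_deriv_nonneg[of ?m y] alt_deriv_antimono[of ?m 0 y] assms that by auto
  have zero: "finite_diff (D 0) S s t = 0"
    if st: "0 \<le> s" "0 \<le> t" "s + real ?m * t \<le> phi_half / 2" for s t
  proof -
    obtain \<xi> where "\<xi> \<in> {s..s + real ?m * t}" "finite_diff (D 0) S s t = t ^ ?m * alt_deriv ?m \<xi>"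
      using finite_diff_eq_alt_deriv[of S s t] assms st by auto
    then show ?thesis using vanish st by auto
  qed
  have "eventually (\<lambda>t. 0 < t \<and> t < phi_half / 2 / real (Suc ?m)) (at_right 0)"
    using phi_half_pos by (intro eventually_at_right_0_below) simp
  then show ?thesis
  proof eventually_elim
    case (elim t)
    then have "real (Suc ?m) * t < phi_half / 2" by (simp add: field_simps)
    then have "finite_diff (D 0) S 0 t = 0" "finite_diff (D 0) S t t = 0"
      using zero[of 0 t] zero[of t t] elim by (simp_all add: algebra_simps)
    then show ?case
      using finite_diff_insert[OF assms(1,2)] by simp
  qed
qed

lemma finite_diff_ratio_tendsto_0:
  assumes S: "S \<subseteq> {..<d}" "l \<in> S" "2 \<le> card S"
  shows "((\<lambda>t. finite_diff (D 0) S 0 t / finite_diff (D 0) (S - {l}) 0 t) \<longlongrightarrow> 0) (at_right 0)"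
proof -
  define m where "m = card (S - {l})"
  have "finite S" using S(1) by (rule finite_subset) simp
  moreover have "card S \<le> d" using card_mono[OF _ S(1)] by simp
  ultimately have m: "card S = Suc m" "1 \<le> m" "m < d" "finite (S - {l})"
    using S by (auto simp: m_def card_Diff_singleton)
  consider "0 < alt_deriv m 0" | "alt_deriv m 0 = 0"
    using alt_deriv_nonneg[of m 0] m phi_half_pos by fastforce
  then show ?thesis
  proof cases
    case 1
    show ?thesis
    proof (rule tendsto_ratio_at_right_0)
      show "eventually (\<lambda>t. \<bar>finite_diff (D 0) S 0 t\<bar> \<le> (\<bar>alt_deriv (Suc m) 0\<bar> + 1) * t ^ Suc m) (at_right 0)"
        using eventually_abs_finite_diff_le[of S] \<open>finite S\<close> m by simp
      show "eventually (\<lambda>t. alt_deriv m 0 / 2 * t ^ m \<le> finite_diff (D 0) (S - {l}) 0 t) (at_right 0)"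
        using eventually_finite_diff_ge[of "S - {l}"] m 1 by (simp add: m_def)
    qed (use 1 in simp)
  next
    case 2
    have "eventually (\<lambda>t. finite_diff (D 0) (insert l (S - {l})) 0 t = 0) (at_right 0)"
      using m 2 by (intro eventually_finite_diff_insert_eq_0) (auto simp: m_def)
    then have "eventually (\<lambda>t. finite_diff (D 0) S 0 t / finite_diff (D 0) (S - {l}) 0 t = 0) (at_right 0)"
      using \<open>l \<in> S\<close> by (auto simp: insert_absorb elim: eventually_mono)
    then show ?thesis by (rule tendsto_eventually)
  qed
qed

lemma surv_marg_eq_finite_diff:
  assumes "S \<subseteq> {..<d}" "0 < u" "u < 1"
  shows "surv_marg d C S u = finite_diff (D 0) S 0 (phi_real (1 - u))"
proof -
  have "surv_marg d C S u = (\<Sum>T\<in>Pow {..<d}. (-1) ^ card T *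
      C (\<lambda>j. if j \<in> T then (if j \<in> S then 1 - u else 0) else (if j \<in> S then 1 else 1)))"
    unfolding surv_marg_def survival_copula_def by (rule sum.cong) (auto intro!: arg_cong[where f = C])
  also have "\<dots> = finite_diff (D 0) S (real (card S) * 0) (phi_real (1 - u) - 0)"
    using assms generator_eq_phi_real[of "1 - u"] phi_real_nonneg
    by (intro copula_volume_eq_finite_diff) (auto simp: generator_one)
  finally show ?thesis by simp
qed

lemma surv_marg_singleton:
  assumes "j < d" "0 < u" "u < 1"
  shows "surv_marg d C {j} u = u"
proof -
  have "D 0 (phi_real (1 - u)) = 1 - u"
    using D0 gen_inv_generator[of "1 - u"] generator_eq_phi_real[of "1 - u"] phi_real_nonneg assms
    by simp
  then show ?thesis
    using surv_marg_eq_finite_diff[of "{j}" u] assms by (simp add: finite_diff_singleton D0_zero)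
qed

lemma filterlim_phi_real_complement: "filterlim (\<lambda>u. phi_real (1 - u)) (at_right 0) (at_right 0)"
proof -
  have near_0: "eventually (\<lambda>u. 0 < u \<and> u < 1/2) (at_right (0::real))"
    by (rule eventually_at_right_0_below) simp
  have "((\<lambda>u. phi_real (1 - u)) \<longlongrightarrow> 0) (at_right 0)"
  proof (rule Lim_null_comparison)
    show "eventually (\<lambda>u. norm (phi_real (1 - u)) \<le> 2 * phi_half * u) (at_right 0)"
      using near_0 by eventually_elim (use phi_real_near_one phi_real_nonneg in \<open>auto simp: mult_ac\<close>)
    show "((\<lambda>u. 2 * phi_half * u) \<longlongrightarrow> 0) (at_right 0)"
      using tendsto_mult[OF tendsto_const tendsto_ident_at, of "2 * phi_half" 0 "{0<..}"] by simp
  qed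
  moreover have "eventually (\<lambda>u. 0 < phi_real (1 - u)) (at_right 0)"
    using near_0 by eventually_elim (auto intro: phi_real_pos)
  ultimately show ?thesis
    unfolding filterlim_at by (auto elim: eventually_mono)
qed

lemma mutual_asymp_indep_copula: "mutual_asymp_indep d C"
  unfolding mutual_asymp_indep_def
proof (intro allI impI, elim conjE)
  fix S l assume S: "S \<subseteq> {..<d}" "2 \<le> card S" "l \<in> S"
  have "((\<lambda>u. finite_diff (D 0) S 0 (phi_real (1 - u)) / finite_diff (D 0) (S - {l}) 0 (phi_real (1 - u)))
      \<longlongrightarrow> 0) (at_right 0)"
    using finite_diff_ratio_tendsto_0[OF S(1,3,2)] filterlim_phi_real_complement
    by (rule filterlim_compose)
  moreover have "eventually (\<lambda>u. finite_diff (D 0) S 0 (phi_real (1 - u)) / finite_diff (D 0) (S - {l}) 0 (phi_real (1 - u))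
      = surv_marg d C S u / surv_marg d C (S - {l}) u) (at_right 0)"
    using eventually_at_right_0_below[OF zero_less_one]
  proof eventually_elim
    case (elim u)
    have "S - {l} \<subseteq> {..<d}" using S by auto
    then show ?case
      using elim surv_marg_eq_finite_diff[OF S(1)] surv_marg_eq_finite_diff[of "S - {l}"] by simp
  qed
  ultimately show "((\<lambda>u. surv_marg d C S u / surv_marg d C (S - {l}) u) \<longlongrightarrow> 0) (at_right 0)"
    by (rule Lim_transform_eventually)
qed

lemma pairwise_asymp_indep_copula: "pairwise_asymp_indep d C"
  unfolding pairwise_asymp_indep_def
proof (intro allI impI, elim conjE)
  fix j l assume "j < d" "l < d" "j \<noteq> l"
  then have "{j, l} \<subseteq> {..<d}" "2 \<le> card {j, l}" "{j, l} - {l} = {j}" by auto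
  then have "((\<lambda>u. surv_marg d C {j, l} u / surv_marg d C {j} u) \<longlongrightarrow> 0) (at_right 0)"
    using mutual_asymp_indep_copula unfolding mutual_asymp_indep_def by (metis insertCI)
  moreover have "eventually (\<lambda>u. surv_marg d C {j, l} u / surv_marg d C {j} u = surv_marg d C {j, l} u / u)
      (at_right 0)"
    using eventually_at_right_0_below[OF zero_less_one]
    by eventually_elim (use \<open>j < d\<close> surv_marg_singleton in auto)
  ultimately have "((\<lambda>u. surv_marg d C {j, l} u / u) \<longlongrightarrow> 0) (at_right 0)"
    by (rule Lim_transform_eventually)
  then show "(\<lambda>u. surv_marg d C {j, l} u) \<in> o[at_right 0](\<lambda>u. u)"
    by (rule smalloI_tendsto) (use eventually_at_right_less[of "0::real"] in \<open>auto elim: eventually_mono\<close>)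
qed

end

theorem mainTheorem5:
  fixes d :: nat and \<phi> :: "real \<Rightarrow> ennreal" and D :: "nat \<Rightarrow> real \<Rightarrow> real"
  assumes "d \<ge> 2"
    and "archimedean_generator d \<phi>"
    and "\<forall>t\<ge>0. D 0 t = gen_inv \<phi> (ennreal t)"
    and "\<forall>j<d. \<forall>t\<ge>0. (D j has_real_derivative D (Suc j) t) (at t within {0..})"
    and "\<forall>j\<le>d. continuous_on {0..} (D j)"
  shows "pairwise_asymp_indep d (archimedean_copula d \<phi>) \<and>
         mutual_asymp_indep d (archimedean_copula d \<phi>)"
proof -
  interpret smooth_archimedean d \<phi> D
    using assms by unfold_locales
  show ?thesis
    using pairwise_asymp_indep_copula mutual_asymp_indep_copula by simp
qed

end
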